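(* Suppose that $\Gamma(t)$ is finite for every $t\in S$. Let $D\subset S$ and let $A\subset\Omega$ be $D$-determined. Then $F_A\cap\mathcal H_\pi=F^D_A\cap\mathcal H_\pi$.
   Context: Let $\mathcal H$ be a complex Hilbert space. A projection is a bounded self-adjoint idempotent operator; $\wedge_\alpha p_\alpha$ is the projection onto the intersection of the ranges of the $p_\alpha$. Sums of countably many operators are understood strongly. Let $S$ be an arbitrary set; for each $t\in S$ let $\Gamma(t)$ be a countable set and for $a\in\Gamma(t)$ let $p^t_a$ be a projection on $\mathcal H$ with $\sum_{a\in\Gamma(t)}p^t_a=I$. Let $\pi=\{p^t_a\}$ and $p^{t_1,\dots,t_k}_{a_1,\dots,a_k}=\wedge_{i=1}^kp^{t_i}_{a_i}$. $\pi$ commutes on $\phi$ if $W\phi=V\phi$ whenever $W,V$ are finite products of elements of $\pi$ with the same factors (with multiplicity) in possibly different orders; $\mathcal H_\pi$ is the set of such $\phi$. Let $\Omega=\prod_{t\in S}\Gamma(t)$. For $A\subset\Omega$ and $D\subset S$, $F^D_A=\{\phi\in\mathcal H:$ for every $\omega\in A$ there are $t_1,\dots,t_k\in D$ with $p^{t_1,\dots,t_k}_{\omega_{t_1},\dots,\omega_{t_k}}\phi=0\}$, and $F_A=F^S_A$. A set $A\subset\Omega$ is $D$-determined if any two elements of $\Omega$ with identical restrictions to $D$ either both belong to $A$ or both do not. *)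

theory Defs
  imports "HOL-Analysis.Analysis" "HOL-Library.Multiset"
begin

text \<open>A complex Hilbert space is modelled as a real Hilbert space
  (type class real_inner + complete_space) together with a complex structure J
  (multiplication by the imaginary unit): J is real-linear, J (J x) = -x and J is
  an isometry for the real inner product. The complex inner product is then
  inner x y + i * inner x (J y) (real part = the real inner product).\<close>

definition complex_structure :: "('h::real_inner \<Rightarrow> 'h) \<Rightarrow> bool" where
  "complex_structure J \<longleftrightarrow> linear J \<and> (\<forall>x. J (J x) = - x) \<and> (\<forall>x y. inner (J x) (J y) = inner x y)"

text \<open>For complex-linear operators, self-adjointness for the complex inner product is
  equivalent to self-adjointness for its real part.\<close>

definition is_projection :: "('h::real_inner \<Rightarrow> 'h) \<Rightarrow> ('h \<Rightarrow> 'h) \<Rightarrow> bool" where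
  "is_projection J p \<longleftrightarrow> bounded_linear p \<and> (\<forall>x. p (J x) = J (p x)) \<and> p \<circ> p = p
     \<and> (\<forall>x y. inner (p x) y = inner x (p y))"

definition wedge :: "('h::real_inner \<Rightarrow> 'h) \<Rightarrow> ('h \<Rightarrow> 'h) set \<Rightarrow> ('h \<Rightarrow> 'h)" where
  "wedge J P = (THE q. is_projection J q \<and> range q = \<Inter> (range ` P))"

definition proj_family :: "'s set \<Rightarrow> ('s \<Rightarrow> 'b set) \<Rightarrow> ('s \<Rightarrow> 'b \<Rightarrow> 'h \<Rightarrow> 'h) \<Rightarrow> ('h \<Rightarrow> 'h) set" where
  "proj_family S \<Gamma> p = {p t a | t a. t \<in> S \<and> a \<in> \<Gamma> t}"

text \<open>H_pi: vectors on which pi commutes (finite products with the same factors, with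
  multiplicity, agree on phi).\<close>

definition commuting_vectors :: "('h \<Rightarrow> 'h) set \<Rightarrow> 'h set" where
  "commuting_vectors PP = {\<phi>. \<forall>ws vs. set ws \<subseteq> PP \<and> set vs \<subseteq> PP \<and> mset ws = mset vs
       \<longrightarrow> foldr (\<circ>) ws id \<phi> = foldr (\<circ>) vs id \<phi>}"

definition Omega :: "'s set \<Rightarrow> ('s \<Rightarrow> 'b set) \<Rightarrow> ('s \<Rightarrow> 'b) set" where
  "Omega S \<Gamma> = PiE S \<Gamma>"

definition F_set :: "('h::real_inner \<Rightarrow> 'h) \<Rightarrow> ('s \<Rightarrow> 'b \<Rightarrow> 'h \<Rightarrow> 'h) \<Rightarrow> 's set \<Rightarrow> ('s \<Rightarrow> 'b) set \<Rightarrow> 'h set" where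
  "F_set J p D A = {\<phi>. \<forall>\<omega>\<in>A. \<exists>T. finite T \<and> T \<subseteq> D \<and> wedge J ((\<lambda>t. p t (\<omega> t)) ` T) \<phi> = 0}"

definition determined :: "('s \<Rightarrow> 'b) set \<Rightarrow> 's set \<Rightarrow> ('s \<Rightarrow> 'b) set \<Rightarrow> bool" where
  "determined Om D A \<longleftrightarrow> (\<forall>\<omega>\<in>Om. \<forall>\<omega>'\<in>Om. (\<forall>t\<in>D. \<omega> t = \<omega>' t) \<longrightarrow> (\<omega> \<in> A \<longleftrightarrow> \<omega>' \<in> A))"

end

theory Submission
  imports Defs
begin

text \<open>
  On a vector \<open>\<phi>\<close> of \<open>H\<^sub>\<pi>\<close> the meet of finitely many projections of \<open>\<pi>\<close> acts as
  their product, taken in any order: the product lies in the range of every factor and is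
  absorbed by the meet. Now let \<open>\<omega> \<in> A\<close> and suppose that no product of projections
  \<open>p t (\<omega> t)\<close> over a finite subset of \<open>D\<close> kills \<open>\<phi>\<close>. As the \<open>p t a\<close>, \<open>a \<in> \<Gamma> t\<close>,
  sum to the identity, a product that does not vanish on \<open>\<phi>\<close> stays nonzero after one more
  suitably chosen factor \<open>p t a\<close>. Since every \<open>\<Gamma> t\<close> is finite, Zorn's lemma then extends
  the restriction of \<open>\<omega>\<close> to \<open>D\<close> to some \<open>\<omega>' \<in> \<Omega>\<close> along which no finite product
  vanishes on \<open>\<phi>\<close>. As \<open>A\<close> is \<open>D\<close>-determined, \<open>\<omega>' \<in> A\<close>, contradicting
  \<open>\<phi> \<in> F\<^sub>A\<close>.
\<close>

section \<open>Orthogonal projections in Hilbert spaces\<close>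

lemma norm_diff_parallelogram:
  fixes x a b :: "'a::real_inner"
  shows "(norm (a - b))\<^sup>2 = 2 * (norm (x - a))\<^sup>2 + 2 * (norm (x - b))\<^sup>2 - 4 * (norm (x - (1/2) *\<^sub>R (a + b)))\<^sup>2"
  unfolding power2_norm_eq_inner
  by (simp add: inner_diff_left inner_diff_right inner_add_left inner_add_right inner_commute algebra_simps)

lemma convex_minimizing_sequence_Cauchy:
  fixes M :: "'a::real_inner set"
  assumes "convex M" and y_in: "\<And>n. y n \<in> M" and d_le: "\<And>z. z \<in> M \<Longrightarrow> d \<le> norm (x - z)"
    and "d \<ge> 0" and y_close: "\<And>n. (norm (x - y n))\<^sup>2 < d\<^sup>2 + inverse (Suc n)"
  shows "Cauchy y"
proof (rule CauchyI)
  have y_diff: "(norm (y n - y k))\<^sup>2 \<le> 2 * inverse (Suc n) + 2 * inverse (Suc k)" for n k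
  proof -
    have "(1/2) *\<^sub>R (y n + y k) \<in> M"
      using convexD[OF \<open>convex M\<close> y_in y_in, of "1/2" "1/2"] by (simp add: scaleR_right_distrib)
    then have "d\<^sup>2 \<le> (norm (x - (1/2) *\<^sub>R (y n + y k)))\<^sup>2"
      using d_le \<open>d \<ge> 0\<close> power_mono by blast
    then show ?thesis
      using norm_diff_parallelogram[of "y n" "y k" x] y_close[of n] y_close[of k] by linarith
  qed
  fix e :: real assume "e > 0"
  then obtain N :: nat where N: "inverse (Suc N) < e\<^sup>2 / 4"
    by (metis reals_Archimedean divide_pos_pos zero_less_numeral zero_less_power)
  have "norm (y m - y n) < e" if "m \<ge> N" "n \<ge> N" for m n
  proof -
    have "inverse (Suc m) \<le> inverse (Suc N)" "inverse (Suc n) \<le> inverse (Suc N)"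
      using that by (simp_all add: le_imp_inverse_le)
    then have "(norm (y m - y n))\<^sup>2 < e\<^sup>2"
      using y_diff[of m n] N by linarith
    then show ?thesis
      using \<open>e > 0\<close> by (simp add: power_less_imp_less_base)
  qed
  then show "\<exists>N. \<forall>m\<ge>N. \<forall>n\<ge>N. norm (y m - y n) < e" by blast
qed

lemma closed_convex_nearest_point:
  fixes M :: "'a::{real_inner,complete_space} set"
  assumes "closed M" and "convex M" and "M \<noteq> {}"
  shows "\<exists>m\<in>M. \<forall>y\<in>M. norm (x - m) \<le> norm (x - y)"
proof -
  define d where "d = infdist x M"
  have d_le: "d \<le> norm (x - y)" if "y \<in> M" for y
    using infdist_le[OF that, of x] by (simp add: d_def dist_norm)
  have "d \<ge> 0" by (simp add: d_def infdist_nonneg)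
  have "\<exists>y\<in>M. (norm (x - y))\<^sup>2 < d\<^sup>2 + inverse (Suc n)" for n
  proof -
    have "d < sqrt (d\<^sup>2 + inverse (Suc n))"
      using \<open>d \<ge> 0\<close> real_less_rsqrt by simp
    then obtain y where "y \<in> M" "norm (x - y) < sqrt (d\<^sup>2 + inverse (Suc n))"
      using cInf_lessD[of "dist x ` M"] \<open>M \<noteq> {}\<close>
      by (auto simp: d_def infdist_notempty dist_norm)
    moreover have "(norm (x - y))\<^sup>2 < (sqrt (d\<^sup>2 + inverse (Suc n)))\<^sup>2"
      using calculation(2) by (intro power_strict_mono) auto
    ultimately show ?thesis
      by auto
  qed
  then obtain y where y_in: "\<And>n. y n \<in> M"
    and y_close: "\<And>n. (norm (x - y n))\<^sup>2 < d\<^sup>2 + inverse (Suc n)"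
    by metis
  have "Cauchy y"
    using \<open>convex M\<close> y_in d_le \<open>d \<ge> 0\<close> y_close by (rule convex_minimizing_sequence_Cauchy)
  then obtain m where "y \<longlonglongrightarrow> m"
    using Cauchy_convergent_iff convergent_def by blast
  have "m \<in> M"
    using closed_sequentially[OF \<open>closed M\<close> y_in \<open>y \<longlonglongrightarrow> m\<close>] .
  have "(\<lambda>n. (norm (x - y n))\<^sup>2) \<longlonglongrightarrow> (norm (x - m))\<^sup>2"
    by (intro tendsto_intros \<open>y \<longlonglongrightarrow> m\<close>)
  moreover have "(\<lambda>n. d\<^sup>2 + inverse (Suc n)) \<longlonglongrightarrow> d\<^sup>2 + 0"
    by (intro tendsto_intros LIMSEQ_inverse_real_of_nat)
  ultimately have "(norm (x - m))\<^sup>2 \<le> d\<^sup>2"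
    using y_close by (intro LIMSEQ_le) (auto intro: less_imp_le)
  then have "norm (x - m) \<le> d"
    using \<open>d \<ge> 0\<close> by (rule power2_le_imp_le)
  then show ?thesis
    using \<open>m \<in> M\<close> d_le by (meson order_trans)
qed

lemma nearest_point_orthogonal:
  fixes M :: "'a::real_inner set"
  assumes "subspace M" and "m \<in> M" and nearest: "\<forall>y\<in>M. norm (x - m) \<le> norm (x - y)"
    and "z \<in> M"
  shows "inner (x - m) z = 0"
proof (cases "z = 0")
  case False
  define c where "c = inner (x - m) z"
  define N where "N = inner z z"
  have "N > 0" using False by (simp add: N_def)
  have expand: "(norm (x - (m + t *\<^sub>R z)))\<^sup>2 = (norm (x - m))\<^sup>2 - 2 * t * c + t\<^sup>2 * N" for t
    unfolding power2_norm_eq_inner c_def N_def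
    by (simp add: inner_diff_left inner_diff_right inner_add_right inner_commute
        algebra_simps power2_eq_square)
  have "m + (c / N) *\<^sub>R z \<in> M"
    using assms by (simp add: subspace_add subspace_scale)
  then have "(norm (x - m))\<^sup>2 \<le> (norm (x - (m + (c / N) *\<^sub>R z)))\<^sup>2"
    using nearest by (simp add: power_mono)
  also have "\<dots> = (norm (x - m))\<^sup>2 - c\<^sup>2 / N"
    unfolding expand using \<open>N > 0\<close> by (simp add: power2_eq_square field_simps)
  finally have "c\<^sup>2 / N \<le> 0" by simp
  then show ?thesis
    using \<open>N > 0\<close> by (simp add: c_def divide_le_0_iff)
qed simp

lemma closed_subspace_orthogonal_decomposition:
  fixes M :: "'a::{real_inner,complete_space} set"
  assumes "closed M" and "subspace M"
  shows "\<exists>m\<in>M. \<forall>z\<in>M. inner (x - m) z = 0"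
proof -
  obtain m where "m \<in> M" "\<forall>y\<in>M. norm (x - m) \<le> norm (x - y)"
    using closed_convex_nearest_point[OF assms(1) subspace_imp_convex[OF assms(2)]]
      subspace_0[OF assms(2)] by blast
  then show ?thesis
    using nearest_point_orthogonal[OF assms(2)] by blast
qed

definition orth_proj :: "'a::real_inner set \<Rightarrow> 'a \<Rightarrow> 'a" where
  "orth_proj M x = (SOME m. m \<in> M \<and> (\<forall>z\<in>M. inner (x - m) z = 0))"

context
  fixes M :: "'a::{real_inner,complete_space} set"
  assumes closed: "closed M" and subspace: "subspace M"
begin

lemma orth_proj_in: "orth_proj M x \<in> M"
  and orth_proj_orthogonal: "z \<in> M \<Longrightarrow> inner (x - orth_proj M x) z = 0"
proof -
  have "\<exists>m. m \<in> M \<and> (\<forall>z\<in>M. inner (x - m) z = 0)"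
    using closed_subspace_orthogonal_decomposition[OF closed subspace] by blast
  from someI_ex[OF this] show "orth_proj M x \<in> M" "z \<in> M \<Longrightarrow> inner (x - orth_proj M x) z = 0"
    unfolding orth_proj_def by auto
qed

lemma orth_proj_unique:
  assumes "m \<in> M" and "\<forall>z\<in>M. inner (x - m) z = 0"
  shows "orth_proj M x = m"
proof -
  have "orth_proj M x - m \<in> M"
    using orth_proj_in assms(1) subspace by (simp add: subspace_diff)
  then have "inner (orth_proj M x - m) (orth_proj M x - m)
      = inner (x - m) (orth_proj M x - m) - inner (x - orth_proj M x) (orth_proj M x - m)"
    by (simp add: inner_diff_left)
  also have "\<dots> = 0"
    using assms(2) orth_proj_orthogonal \<open>orth_proj M x - m \<in> M\<close> by simp
  finally show ?thesis by simp
qed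

lemma orth_proj_id: "m \<in> M \<Longrightarrow> orth_proj M m = m"
  by (rule orth_proj_unique) auto

lemma range_orth_proj: "range (orth_proj M) = M"
  using orth_proj_in orth_proj_id by (metis image_subsetI rangeI subsetI subset_antisym)

lemma orth_proj_add: "orth_proj M (x + y) = orth_proj M x + orth_proj M y"
proof (rule orth_proj_unique)
  show "orth_proj M x + orth_proj M y \<in> M"
    using orth_proj_in subspace by (simp add: subspace_add)
  have "x + y - (orth_proj M x + orth_proj M y) = (x - orth_proj M x) + (y - orth_proj M y)"
    by simp
  then show "\<forall>z\<in>M. inner (x + y - (orth_proj M x + orth_proj M y)) z = 0"
    using orth_proj_orthogonal by (simp only: inner_add_left) simp
qed

lemma orth_proj_scaleR: "orth_proj M (r *\<^sub>R x) = r *\<^sub>R orth_proj M x"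
proof (rule orth_proj_unique)
  show "r *\<^sub>R orth_proj M x \<in> M"
    using orth_proj_in subspace by (simp add: subspace_scale)
  have "r *\<^sub>R x - r *\<^sub>R orth_proj M x = r *\<^sub>R (x - orth_proj M x)"
    by (simp add: scaleR_right_diff_distrib)
  then show "\<forall>z\<in>M. inner (r *\<^sub>R x - r *\<^sub>R orth_proj M x) z = 0"
    using orth_proj_orthogonal by (simp only: inner_scaleR_left) simp
qed

lemma norm_orth_proj_le: "norm (orth_proj M x) \<le> norm x"
proof -
  have "orthogonal (orth_proj M x) (x - orth_proj M x)"
    using orth_proj_orthogonal orth_proj_in by (simp add: orthogonal_def inner_commute)
  then have "(norm (orth_proj M x + (x - orth_proj M x)))\<^sup>2
      = (norm (orth_proj M x))\<^sup>2 + (norm (x - orth_proj M x))\<^sup>2"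
    by (rule norm_add_Pythagorean)
  then have "(norm (orth_proj M x))\<^sup>2 \<le> (norm x)\<^sup>2"
    by simp
  then show ?thesis
    by (rule power2_le_imp_le) simp
qed

lemma bounded_linear_orth_proj: "bounded_linear (orth_proj M)"
  using orth_proj_add orth_proj_scaleR norm_orth_proj_le
  by (intro bounded_linear_intro[where K = 1]) auto

lemma orth_proj_self_adjoint: "inner (orth_proj M x) y = inner x (orth_proj M y)"
proof -
  have "inner (orth_proj M x) y = inner (orth_proj M x) (orth_proj M y)"
    using orth_proj_orthogonal[of "orth_proj M x" y] orth_proj_in
    by (simp add: inner_diff_right inner_commute)
  also have "\<dots> = inner x (orth_proj M y)"
    using orth_proj_orthogonal[of "orth_proj M y" x] orth_proj_in by (simp add: inner_diff_left)
  finally show ?thesis .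
qed

lemma orth_proj_commute:
  assumes "linear J" and "J ` M \<subseteq> M" and adj: "\<And>u v. inner (J u) v = - inner u (J v)"
  shows "orth_proj M (J x) = J (orth_proj M x)"
proof (rule orth_proj_unique)
  show "J (orth_proj M x) \<in> M"
    using assms(2) orth_proj_in by blast
  have "J x - J (orth_proj M x) = J (x - orth_proj M x)"
    using \<open>linear J\<close> by (simp add: linear_diff)
  then show "\<forall>z\<in>M. inner (J x - J (orth_proj M x)) z = 0"
    using assms(2) orth_proj_orthogonal adj by auto
qed

end

lemma complex_structure_adjoint:
  "complex_structure J \<Longrightarrow> inner (J u) v = - inner u (J v)"
  unfolding complex_structure_def by (metis inner_minus_left)

lemma is_projection_orth_proj:
  fixes M :: "'a::{real_inner,complete_space} set"
  assumes "complex_structure J" and "closed M" and "subspace M" and "J ` M \<subseteq> M"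
  shows "is_projection J (orth_proj M)"
proof -
  have "linear J"
    using assms(1) by (simp add: complex_structure_def)
  have "orth_proj M \<circ> orth_proj M = orth_proj M"
    using orth_proj_id[OF assms(2,3)] orth_proj_in[OF assms(2,3)] by auto
  then show ?thesis
    unfolding is_projection_def
    using bounded_linear_orth_proj[OF assms(2,3)] orth_proj_self_adjoint[OF assms(2,3)]
      orth_proj_commute[OF assms(2,3) \<open>linear J\<close> assms(4) complex_structure_adjoint[OF assms(1)]]
    by blast
qed

section \<open>Meets of projections\<close>

lemma range_projection: "is_projection J q \<Longrightarrow> range q = {y. q y = y}"
  unfolding is_projection_def by (auto simp: fun_eq_iff) (metis rangeI)

lemma projection_fixes_range: "is_projection J q \<Longrightarrow> y \<in> range q \<Longrightarrow> q y = y"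
  using range_projection by blast

lemma projection_absorb:
  assumes w: "is_projection J w" and q: "is_projection J q" and "range w \<subseteq> range q"
  shows "w (q x) = w x"
proof -
  have "inner (w (q x)) y = inner (w x) y" for y
  proof -
    have "q (w y) = w y"
      using projection_fixes_range[OF q] \<open>range w \<subseteq> range q\<close> by blast
    have w_sa: "inner (w u) v = inner u (w v)" and q_sa: "inner (q u) v = inner u (q v)" for u v
      using w q unfolding is_projection_def by auto
    show ?thesis
      using \<open>q (w y) = w y\<close> by (simp add: w_sa q_sa)
  qed
  then show ?thesis
    using vector_eq_rdot by blast
qed

lemma projection_eqI:
  assumes "is_projection J q1" and "is_projection J q2" and "range q1 = range q2"
  shows "q1 = q2"
proof
  fix x
  have "q1 x = q1 (q2 x)"
    using projection_absorb[OF assms(1,2)] assms(3) by simp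
  also have "\<dots> = q2 x"
    using projection_fixes_range[OF assms(1)] assms(3) by blast
  finally show "q1 x = q2 x" .
qed

lemma projection_foldr_absorb:
  assumes "is_projection J w" and "\<forall>q\<in>set qs. is_projection J q \<and> range w \<subseteq> range q"
  shows "w (foldr (\<circ>) qs id x) = w x"
  using assms(2) by (induction qs) (auto simp: projection_absorb[OF assms(1)])

lemma projection_wedge:
  fixes J :: "'a::{real_inner,complete_space} \<Rightarrow> 'a"
  assumes "complex_structure J" and P: "\<forall>q\<in>P. is_projection J q"
  shows is_projection_wedge: "is_projection J (wedge J P)"
    and range_wedge: "range (wedge J P) = \<Inter> (range ` P)"
proof -
  define M where "M = \<Inter> (range ` P)"
  have M_fixed: "M = (\<Inter>q\<in>P. {y. q y = y})"
    unfolding M_def using P range_projection by (intro INF_cong) blast+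
  have "closed M"
    unfolding M_fixed using P
    by (intro closed_INT ballI closed_Collect_eq linear_continuous_on continuous_on_id)
      (auto simp: is_projection_def)
  have "subspace M"
    unfolding M_fixed using P
  proof (intro subspace_Inter ballI, clarify)
    fix q assume "q \<in> P"
    then interpret bounded_linear q
      using P by (simp add: is_projection_def)
    show "subspace {y. q y = y}"
      by (auto intro!: subspaceI simp: add scaleR zero)
  qed
  have "J ` M \<subseteq> M"
    unfolding M_fixed
  proof (intro image_subsetI INT_I CollectI)
    fix y q assume "y \<in> (\<Inter>q\<in>P. {y. q y = y})" and "q \<in> P"
    then have "q y = y" by blast
    then show "q (J y) = J y"
      using P \<open>q \<in> P\<close> unfolding is_projection_def by metis
  qed
  have orth_proj_M: "is_projection J (orth_proj M) \<and> range (orth_proj M) = M"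
    using is_projection_orth_proj[OF assms(1) \<open>closed M\<close> \<open>subspace M\<close> \<open>J ` M \<subseteq> M\<close>]
      range_orth_proj[OF \<open>closed M\<close> \<open>subspace M\<close>] by blast
  have "wedge J P = orth_proj M"
    unfolding wedge_def M_def[symmetric]
    by (rule the_equality) (use orth_proj_M projection_eqI in blast)+
  then show "is_projection J (wedge J P)" "range (wedge J P) = \<Inter> (range ` P)"
    using orth_proj_M unfolding M_def by auto
qed

section \<open>Ordered products of projections\<close>

text \<open>The factors are composed along an arbitrary enumeration of \<open>T\<close>; on vectors of
  \<open>H\<^sub>\<pi>\<close> the result does not depend on the enumeration.\<close>

definition proj_prod :: "('s \<Rightarrow> 'b \<Rightarrow> 'h \<Rightarrow> 'h) \<Rightarrow> 's set \<Rightarrow> ('s \<Rightarrow> 'b) \<Rightarrow> 'h \<Rightarrow> 'h" where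
  "proj_prod p T f = foldr (\<circ>) (map (\<lambda>t. p t (f t)) (SOME ts. distinct ts \<and> set ts = T)) id"

lemma proj_prod_enumeration:
  assumes "finite T"
  obtains ts where "distinct ts" and "set ts = T"
    and "proj_prod p T f = foldr (\<circ>) (map (\<lambda>t. p t (f t)) ts) id"
proof -
  have "\<exists>ts. distinct ts \<and> set ts = T"
    using finite_distinct_list[OF assms] by blast
  from someI_ex[OF this] show thesis
    by (intro that[of "SOME ts. distinct ts \<and> set ts = T"]) (auto simp: proj_prod_def)
qed

lemma proj_prod_cong:
  assumes "finite T" and "\<And>t. t \<in> T \<Longrightarrow> f t = g t"
  shows "proj_prod p T f = proj_prod p T g"
proof -
  have "set (SOME ts. distinct ts \<and> set ts = T) = T"
    using someI_ex[of "\<lambda>ts. distinct ts \<and> set ts = T"] finite_distinct_list[OF assms(1)] by auto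
  then show ?thesis
    unfolding proj_prod_def using assms(2)
    by (intro arg_cong[where f = "\<lambda>qs. foldr (\<circ>) qs id"] map_cong) auto
qed

lemma proj_prod_eq_foldr:
  assumes "\<phi> \<in> commuting_vectors (proj_family S \<Gamma> p)" and "T \<subseteq> S" and "\<forall>t\<in>T. f t \<in> \<Gamma> t"
    and "distinct ts" and "set ts = T"
  shows "proj_prod p T f \<phi> = foldr (\<circ>) (map (\<lambda>t. p t (f t)) ts) id \<phi>"
proof -
  obtain us where us: "distinct us" "set us = T"
    and prod: "proj_prod p T f = foldr (\<circ>) (map (\<lambda>t. p t (f t)) us) id"
    using proj_prod_enumeration[of T p f] assms(5) by blast
  have "mset us = mset ts"
    using us assms(4,5) by (metis mset_set_set)
  then have "mset (map (\<lambda>t. p t (f t)) us) = mset (map (\<lambda>t. p t (f t)) ts)"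
    by simp
  moreover have "set (map (\<lambda>t. p t (f t)) vs) \<subseteq> proj_family S \<Gamma> p" if "set vs = T" for vs
    using that assms(2,3) unfolding proj_family_def by auto
  ultimately show ?thesis
    using assms(1) us(2) assms(5) unfolding prod commuting_vectors_def by blast
qed

lemma proj_prod_in_range:
  assumes "\<phi> \<in> commuting_vectors (proj_family S \<Gamma> p)" and "finite T" and "T \<subseteq> S"
    and "\<forall>s\<in>T. f s \<in> \<Gamma> s" and "t \<in> T"
  shows "proj_prod p T f \<phi> \<in> range (p t (f t))"
proof -
  obtain us where "distinct us" "set us = T - {t}"
    using finite_distinct_list assms(2) by (meson finite_Diff)
  then have "proj_prod p T f \<phi> = foldr (\<circ>) (map (\<lambda>s. p s (f s)) (t # us)) id \<phi>"
    using assms by (intro proj_prod_eq_foldr) auto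
  then show ?thesis by simp
qed

lemma proj_prod_insert:
  assumes "\<phi> \<in> commuting_vectors (proj_family S \<Gamma> p)" and "finite T" and "insert t T \<subseteq> S"
    and "t \<notin> T" and "\<forall>s\<in>T. f s \<in> \<Gamma> s" and "a \<in> \<Gamma> t"
  shows "proj_prod p (insert t T) (f(t := a)) \<phi> = p t a (proj_prod p T f \<phi>)"
proof -
  obtain us where us: "distinct us" "set us = T"
    using finite_distinct_list assms(2) by blast
  have "proj_prod p (insert t T) (f(t := a)) \<phi>
      = foldr (\<circ>) (map (\<lambda>s. p s ((f(t := a)) s)) (t # us)) id \<phi>"
    using assms us by (intro proj_prod_eq_foldr) auto
  also have "\<dots> = p t a (foldr (\<circ>) (map (\<lambda>s. p s ((f(t := a)) s)) us) id \<phi>)"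
    by simp
  also have "map (\<lambda>s. p s ((f(t := a)) s)) us = map (\<lambda>s. p s (f s)) us"
    using assms(4) us(2) by (intro map_cong) auto
  also have "foldr (\<circ>) (map (\<lambda>s. p s (f s)) us) id \<phi> = proj_prod p T f \<phi>"
    using assms(3,5) us by (intro proj_prod_eq_foldr[OF assms(1), symmetric]) auto
  finally show ?thesis .
qed

lemma proj_prod_insert_nonzero:
  assumes "\<phi> \<in> commuting_vectors (proj_family S \<Gamma> p)" and "finite T" and "insert t T \<subseteq> S"
    and "t \<notin> T" and "\<forall>s\<in>T. f s \<in> \<Gamma> s" and resolution: "\<forall>x. (\<Sum>a\<in>\<Gamma> t. p t a x) = x"
    and "proj_prod p T f \<phi> \<noteq> 0"
  shows "\<exists>a\<in>\<Gamma> t. proj_prod p (insert t T) (f(t := a)) \<phi> \<noteq> 0"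
proof -
  have "(\<Sum>a\<in>\<Gamma> t. proj_prod p (insert t T) (f(t := a)) \<phi>) = (\<Sum>a\<in>\<Gamma> t. p t a (proj_prod p T f \<phi>))"
    using proj_prod_insert[OF assms(1-5)] by (intro sum.cong) auto
  also have "\<dots> = proj_prod p T f \<phi>"
    using resolution by blast
  finally show ?thesis
    using \<open>proj_prod p T f \<phi> \<noteq> 0\<close> sum.neutral by force
qed

lemma foldr_comp_append: "foldr (\<circ>) (qs @ rs) id x = foldr (\<circ>) qs id (foldr (\<circ>) rs id x)"
  by (induction qs) auto

lemma foldr_comp_linear_zero: "\<forall>q\<in>set qs. linear q \<Longrightarrow> foldr (\<circ>) qs id 0 = 0"
  by (induction qs) (auto simp: linear_0)

lemma proj_prod_superset_zero:
  assumes "\<phi> \<in> commuting_vectors (proj_family S \<Gamma> p)" and "finite T'" and "T' \<subseteq> S"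
    and "T \<subseteq> T'" and "\<forall>t\<in>T'. f t \<in> \<Gamma> t" and lin: "\<forall>t\<in>S. \<forall>a\<in>\<Gamma> t. linear (p t a)"
    and "proj_prod p T f \<phi> = 0"
  shows "proj_prod p T' f \<phi> = 0"
proof -
  obtain us where us: "distinct us" "set us = T' - T"
    using finite_distinct_list assms(2) by (meson finite_Diff)
  obtain vs where vs: "distinct vs" "set vs = T"
    using finite_distinct_list assms(2,4) by (meson finite_subset)
  have "proj_prod p T' f \<phi> = foldr (\<circ>) (map (\<lambda>t. p t (f t)) (us @ vs)) id \<phi>"
    using assms us vs by (intro proj_prod_eq_foldr) auto
  also have "\<dots> = foldr (\<circ>) (map (\<lambda>t. p t (f t)) us) id (foldr (\<circ>) (map (\<lambda>t. p t (f t)) vs) id \<phi>)"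
    by (simp only: map_append foldr_comp_append)
  also have "foldr (\<circ>) (map (\<lambda>t. p t (f t)) vs) id \<phi> = proj_prod p T f \<phi>"
    using assms(3-5) vs by (intro proj_prod_eq_foldr[OF assms(1), symmetric]) auto
  also note \<open>proj_prod p T f \<phi> = 0\<close>
  also have "foldr (\<circ>) (map (\<lambda>t. p t (f t)) us) id 0 = 0"
    using assms(3,5) lin us by (intro foldr_comp_linear_zero) auto
  finally show ?thesis .
qed

lemma wedge_eq_proj_prod:
  fixes J :: "'h::{real_inner,complete_space} \<Rightarrow> 'h"
  assumes "complex_structure J" and "\<phi> \<in> commuting_vectors (proj_family S \<Gamma> p)"
    and "finite T" and "T \<subseteq> S" and "\<forall>t\<in>T. f t \<in> \<Gamma> t"
    and proj: "\<forall>t\<in>S. \<forall>a\<in>\<Gamma> t. is_projection J (p t a)"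
  shows "wedge J ((\<lambda>t. p t (f t)) ` T) \<phi> = proj_prod p T f \<phi>"
proof -
  let ?W = "wedge J ((\<lambda>t. p t (f t)) ` T)"
  have factors: "\<forall>q\<in>(\<lambda>t. p t (f t)) ` T. is_projection J q"
    using assms(4,5) proj by auto
  note W = is_projection_wedge[OF assms(1) factors] range_wedge[OF assms(1) factors]
  obtain ts where ts: "distinct ts" "set ts = T"
    and prod: "proj_prod p T f = foldr (\<circ>) (map (\<lambda>t. p t (f t)) ts) id"
    by (rule proj_prod_enumeration[OF assms(3)])
  have "proj_prod p T f \<phi> \<in> range ?W"
    unfolding W(2) using proj_prod_in_range[OF assms(2-5)] by blast
  then have "proj_prod p T f \<phi> = ?W (proj_prod p T f \<phi>)"
    by (rule projection_fixes_range[OF W(1), symmetric])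
  also have "\<dots> = ?W \<phi>"
    unfolding prod
  proof (rule projection_foldr_absorb[OF W(1)])
    show "\<forall>q\<in>set (map (\<lambda>t. p t (f t)) ts). is_projection J q \<and> range ?W \<subseteq> range q"
      unfolding W(2) using factors ts(2) by (simp add: INT_lower) blast
  qed
  finally show ?thesis ..
qed

section \<open>Extending consistent partial choice functions\<close>

definition graph_fun :: "('a \<times> 'b) set \<Rightarrow> 'a \<Rightarrow> 'b" where
  "graph_fun G t = (THE a. (t, a) \<in> G)"

lemma graph_fun_eq: "single_valued G \<Longrightarrow> (t, a) \<in> G \<Longrightarrow> graph_fun G t = a"
  unfolding graph_fun_def by (blast intro: the_equality dest: single_valuedD)

lemma single_valued_graph: "single_valued ((\<lambda>t. (t, f t)) ` D)"
  by (auto simp: single_valued_def)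

lemma graph_fun_graph: "t \<in> D \<Longrightarrow> graph_fun ((\<lambda>t. (t, f t)) ` D) t = f t"
  by (rule graph_fun_eq[OF single_valued_graph]) simp

locale choice_consistency =
  fixes S :: "'s set" and \<Gamma> :: "'s \<Rightarrow> 'b set" and P :: "'s set \<Rightarrow> ('s \<Rightarrow> 'b) \<Rightarrow> bool"
  assumes finite_branches: "\<And>t. t \<in> S \<Longrightarrow> finite (\<Gamma> t)"
    and restriction_cong: "\<And>T f g. finite T \<Longrightarrow> (\<And>t. t \<in> T \<Longrightarrow> f t = g t) \<Longrightarrow> P T f \<Longrightarrow> P T g"
    and downward_closed: "\<And>T T' f. finite T' \<Longrightarrow> T' \<subseteq> S \<Longrightarrow> T \<subseteq> T' \<Longrightarrow> (\<forall>t\<in>T'. f t \<in> \<Gamma> t)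
      \<Longrightarrow> P T' f \<Longrightarrow> P T f"
    and extensible: "\<And>T f t. finite T \<Longrightarrow> T \<subseteq> S \<Longrightarrow> t \<in> S \<Longrightarrow> t \<notin> T \<Longrightarrow> (\<forall>s\<in>T. f s \<in> \<Gamma> s)
      \<Longrightarrow> P T f \<Longrightarrow> \<exists>a\<in>\<Gamma> t. P (insert t T) (f(t := a))"
begin

text \<open>Partial choice functions are represented by their graphs, so that a chain of them is
  bounded by its union.\<close>

definition consistent :: "('s \<times> 'b) set \<Rightarrow> bool" where
  "consistent G \<longleftrightarrow> G \<subseteq> Sigma S \<Gamma> \<and> single_valued G
     \<and> (\<forall>T. finite T \<and> T \<subseteq> Domain G \<longrightarrow> P T (graph_fun G))"

lemma consistent_Union_chain:
  assumes "C \<noteq> {}" and chain: "subset.chain \<A> C" and cons: "\<forall>G\<in>C. consistent G"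
  shows "consistent (\<Union>C)"
proof -
  have sv: "single_valued (\<Union>C)"
  proof (rule single_valuedI)
    fix t a b assume "(t, a) \<in> \<Union>C" "(t, b) \<in> \<Union>C"
    then obtain G H where "G \<in> C" "H \<in> C" "(t, a) \<in> G" "(t, b) \<in> H" by blast
    moreover have "G \<subseteq> H \<or> H \<subseteq> G"
      using chain \<open>G \<in> C\<close> \<open>H \<in> C\<close> by (auto simp: subset.chain_def)
    ultimately show "a = b"
      using cons unfolding consistent_def by (metis single_valuedD subsetD)
  qed
  have "P T (graph_fun (\<Union>C))" if "finite T" and "T \<subseteq> Domain (\<Union>C)" for T
  proof -
    have "(\<lambda>t. (t, graph_fun (\<Union>C) t)) ` T \<subseteq> \<Union>C"
    proof (rule image_subsetI)
      fix t assume "t \<in> T"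
      then obtain a where "(t, a) \<in> \<Union>C"
        using \<open>T \<subseteq> Domain (\<Union>C)\<close> by (meson DomainE subsetD)
      then show "(t, graph_fun (\<Union>C) t) \<in> \<Union>C"
        using graph_fun_eq[OF sv] by simp
    qed
    then obtain G where "G \<in> C" and G: "(\<lambda>t. (t, graph_fun (\<Union>C) t)) ` T \<subseteq> G"
      by (rule finite_subset_Union_chain[OF finite_imageI[OF \<open>finite T\<close>] _ \<open>C \<noteq> {}\<close> chain])
    then have "consistent G"
      using cons by blast
    moreover have "T \<subseteq> Domain G"
      using G by (blast intro: DomainI)
    ultimately have "P T (graph_fun G)" and "single_valued G"
      using \<open>finite T\<close> unfolding consistent_def by blast+
    moreover have "graph_fun G t = graph_fun (\<Union>C) t" if "t \<in> T" for t
      using graph_fun_eq[OF \<open>single_valued G\<close>] G that by blast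
    ultimately show ?thesis
      using restriction_cong[OF \<open>finite T\<close>] by blast
  qed
  then show ?thesis
    using cons sv unfolding consistent_def by blast
qed

lemma consistent_insert_iff:
  assumes "consistent M" and "t \<in> S" and "t \<notin> Domain M" and "a \<in> \<Gamma> t"
  shows "consistent (insert (t, a) M) \<longleftrightarrow>
    (\<forall>T. finite T \<longrightarrow> T \<subseteq> insert t (Domain M) \<longrightarrow> P T ((graph_fun M)(t := a)))"
proof -
  let ?G = "insert (t, a) M"
  have M: "M \<subseteq> Sigma S \<Gamma>" "single_valued M"
    using \<open>consistent M\<close> unfolding consistent_def by auto
  have sv: "single_valued ?G"
    using M(2) \<open>t \<notin> Domain M\<close> by (auto simp: single_valued_def)
  have "?G \<subseteq> Sigma S \<Gamma>"
    using M(1) assms(2,4) by blast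
  moreover have "graph_fun ?G s = ((graph_fun M)(t := a)) s" if "s \<in> insert t (Domain M)" for s
    using that graph_fun_eq[OF sv] graph_fun_eq[OF M(2)] \<open>t \<notin> Domain M\<close> by fastforce
  ultimately show ?thesis
    unfolding consistent_def using sv restriction_cong
    by (metis (no_types, lifting) Domain_insert fst_conv subsetD)
qed

lemma consistent_maximal_total:
  assumes "consistent M" and maximal: "\<And>G. consistent G \<Longrightarrow> M \<subseteq> G \<Longrightarrow> G = M"
  shows "Domain M = S"
proof (rule ccontr)
  have M: "M \<subseteq> Sigma S \<Gamma>" "single_valued M"
    and P_M: "\<And>T. finite T \<Longrightarrow> T \<subseteq> Domain M \<Longrightarrow> P T (graph_fun M)"
    using \<open>consistent M\<close> unfolding consistent_def by auto
  have in_Gamma: "graph_fun M s \<in> \<Gamma> s" if "s \<in> Domain M" for s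
    using that M graph_fun_eq by fastforce
  assume "Domain M \<noteq> S"
  then obtain t where "t \<in> S" "t \<notin> Domain M"
    using M(1) by blast
  have "\<not> consistent (insert (t, a) M)" for a
    using maximal[of "insert (t, a) M"] \<open>t \<notin> Domain M\<close> by blast
  then have "\<exists>T. finite T \<and> T \<subseteq> insert t (Domain M) \<and> \<not> P T ((graph_fun M)(t := a))"
    if "a \<in> \<Gamma> t" for a
    using consistent_insert_iff[OF \<open>consistent M\<close> \<open>t \<in> S\<close> \<open>t \<notin> Domain M\<close> that] by blast
  then obtain T where T: "\<And>a. a \<in> \<Gamma> t \<Longrightarrow> finite (T a) \<and> T a \<subseteq> insert t (Domain M)
      \<and> \<not> P (T a) ((graph_fun M)(t := a))"
    by metis
  \<comment> \<open>As \<open>\<Gamma> t\<close> is finite, the witnesses against all one-point extensions fit into one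
    finite \<open>U\<close>, and extensibility at \<open>U\<close> refutes one of them.\<close>
  define U where "U = (\<Union>a\<in>\<Gamma> t. T a) - {t}"
  have "finite U" "U \<subseteq> Domain M"
    using T finite_branches[OF \<open>t \<in> S\<close>] by (auto simp: U_def)
  then have "U \<subseteq> S" "\<forall>s\<in>U. graph_fun M s \<in> \<Gamma> s"
    using M(1) in_Gamma by auto
  then obtain a where "a \<in> \<Gamma> t" and "P (insert t U) ((graph_fun M)(t := a))"
    using extensible[OF \<open>finite U\<close> _ \<open>t \<in> S\<close> _ _ P_M[OF \<open>finite U\<close> \<open>U \<subseteq> Domain M\<close>]]
    by (auto simp: U_def)
  moreover have "T a \<subseteq> insert t U"
    using T[OF \<open>a \<in> \<Gamma> t\<close>] \<open>a \<in> \<Gamma> t\<close> by (auto simp: U_def)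
  ultimately have "P (T a) ((graph_fun M)(t := a))"
    using downward_closed[of "insert t U"] \<open>finite U\<close> \<open>U \<subseteq> S\<close> \<open>t \<in> S\<close>
      \<open>\<forall>s\<in>U. graph_fun M s \<in> \<Gamma> s\<close> by auto
  then show False
    using T[OF \<open>a \<in> \<Gamma> t\<close>] by blast
qed

lemma consistent_graph:
  assumes "D \<subseteq> S" and "\<forall>t\<in>D. f t \<in> \<Gamma> t" and "\<And>T. finite T \<Longrightarrow> T \<subseteq> D \<Longrightarrow> P T f"
  shows "consistent ((\<lambda>t. (t, f t)) ` D)"
  unfolding consistent_def
proof (intro conjI allI impI single_valued_graph)
  show "(\<lambda>t. (t, f t)) ` D \<subseteq> Sigma S \<Gamma>"
    using assms(1,2) by auto
  fix T assume "finite T \<and> T \<subseteq> Domain ((\<lambda>t. (t, f t)) ` D)"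
  then have "finite T" "T \<subseteq> D"
    by auto
  show "P T (graph_fun ((\<lambda>t. (t, f t)) ` D))"
    by (rule restriction_cong[OF \<open>finite T\<close> _ assms(3)[OF \<open>finite T\<close> \<open>T \<subseteq> D\<close>]])
      (use graph_fun_graph \<open>T \<subseteq> D\<close> in \<open>metis subsetD\<close>)
qed

lemma total_extension:
  assumes "D \<subseteq> S" and "\<forall>t\<in>D. f t \<in> \<Gamma> t" and "\<And>T. finite T \<Longrightarrow> T \<subseteq> D \<Longrightarrow> P T f"
  shows "\<exists>g\<in>PiE S \<Gamma>. (\<forall>t\<in>D. g t = f t) \<and> (\<forall>T. finite T \<longrightarrow> T \<subseteq> S \<longrightarrow> P T g)"
proof -
  define G\<^sub>0 where "G\<^sub>0 = (\<lambda>t. (t, f t)) ` D"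
  let ?\<A> = "{G. G\<^sub>0 \<subseteq> G \<and> consistent G}"
  have "\<exists>M\<in>?\<A>. \<forall>X\<in>?\<A>. M \<subseteq> X \<longrightarrow> X = M"
  proof (rule subset_Zorn_nonempty)
    show "?\<A> \<noteq> {}"
      using consistent_graph[OF assms] unfolding G\<^sub>0_def by blast
    show "\<Union>C \<in> ?\<A>" if "C \<noteq> {}" and "subset.chain ?\<A> C" for C
      using that consistent_Union_chain[OF that] by (auto simp: subset.chain_def)
  qed
  then obtain M where "G\<^sub>0 \<subseteq> M" and "consistent M" and maximal: "\<forall>G\<in>?\<A>. M \<subseteq> G \<longrightarrow> G = M"
    by blast
  have dom: "Domain M = S"
    using \<open>consistent M\<close> by (rule consistent_maximal_total) (use maximal \<open>G\<^sub>0 \<subseteq> M\<close> in blast)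
  have M: "M \<subseteq> Sigma S \<Gamma>" "single_valued M"
    and P_M: "\<And>T. finite T \<Longrightarrow> T \<subseteq> S \<Longrightarrow> P T (graph_fun M)"
    using \<open>consistent M\<close> dom unfolding consistent_def by auto
  show ?thesis
  proof (intro bexI conjI ballI allI impI)
    show "restrict (graph_fun M) S \<in> PiE S \<Gamma>"
      using M dom graph_fun_eq by fastforce
    show "restrict (graph_fun M) S t = f t" if "t \<in> D" for t
      using that \<open>G\<^sub>0 \<subseteq> M\<close> assms(1) graph_fun_eq[OF M(2)] by (auto simp: G\<^sub>0_def)
    show "P T (restrict (graph_fun M) S)" if "finite T" "T \<subseteq> S" for T
      by (rule restriction_cong[OF \<open>finite T\<close> _ P_M[OF that]]) (use that(2) in auto)
  qed
qed
end

section \<open>Vanishing of products on determining sets\<close>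

lemma proj_prod_nonvanishing_extension:
  assumes finite_\<Gamma>: "\<forall>t\<in>S. finite (\<Gamma> t)"
    and linear_p: "\<forall>t\<in>S. \<forall>a\<in>\<Gamma> t. linear (p t a)"
    and resolution: "\<forall>t\<in>S. \<forall>x. (\<Sum>a\<in>\<Gamma> t. p t a x) = x"
    and \<phi>: "\<phi> \<in> commuting_vectors (proj_family S \<Gamma> p)"
    and "D \<subseteq> S" and "\<forall>t\<in>D. \<omega> t \<in> \<Gamma> t"
    and "\<And>T. finite T \<Longrightarrow> T \<subseteq> D \<Longrightarrow> proj_prod p T \<omega> \<phi> \<noteq> 0"
  shows "\<exists>\<omega>'\<in>PiE S \<Gamma>. (\<forall>t\<in>D. \<omega>' t = \<omega> t) \<and> (\<forall>T. finite T \<longrightarrow> T \<subseteq> S \<longrightarrow> proj_prod p T \<omega>' \<phi> \<noteq> 0)"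
proof -
  interpret choice_consistency S \<Gamma> "\<lambda>T f. proj_prod p T f \<phi> \<noteq> 0"
  proof
    show "finite (\<Gamma> t)" if "t \<in> S" for t
      using finite_\<Gamma> that by blast
    show "proj_prod p T g \<phi> \<noteq> 0"
      if "finite T" and "\<And>t. t \<in> T \<Longrightarrow> f t = g t" and "proj_prod p T f \<phi> \<noteq> 0" for T f g
      using that proj_prod_cong by metis
    show "proj_prod p T f \<phi> \<noteq> 0"
      if "finite T'" "T' \<subseteq> S" "T \<subseteq> T'" "\<forall>t\<in>T'. f t \<in> \<Gamma> t" and "proj_prod p T' f \<phi> \<noteq> 0"
      for T T' f
      using proj_prod_superset_zero[OF \<phi> that(1-4) linear_p] that(5) by blast
    show "\<exists>a\<in>\<Gamma> t. proj_prod p (insert t T) (f(t := a)) \<phi> \<noteq> 0"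
      if "finite T" "T \<subseteq> S" "t \<in> S" "t \<notin> T" "\<forall>s\<in>T. f s \<in> \<Gamma> s" and "proj_prod p T f \<phi> \<noteq> 0"
      for T f t
      using proj_prod_insert_nonzero[OF \<phi> that(1) _ that(4,5) _ that(6)] that(2,3) resolution by blast
  qed
  show ?thesis
    by (rule total_extension) (use assms in auto)
qed

lemma mem_F_set_iff_proj_prod:
  fixes J :: "'h::{real_inner,complete_space} \<Rightarrow> 'h"
  assumes "complex_structure J" and proj: "\<forall>t\<in>S. \<forall>a\<in>\<Gamma> t. is_projection J (p t a)"
    and "A \<subseteq> Omega S \<Gamma>" and "\<phi> \<in> commuting_vectors (proj_family S \<Gamma> p)" and "E \<subseteq> S"
  shows "\<phi> \<in> F_set J p E A \<longleftrightarrow> (\<forall>\<omega>\<in>A. \<exists>T. finite T \<and> T \<subseteq> E \<and> proj_prod p T \<omega> \<phi> = 0)"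
proof -
  have "wedge J ((\<lambda>t. p t (\<omega> t)) ` T) \<phi> = proj_prod p T \<omega> \<phi>"
    if "\<omega> \<in> A" and "finite T" and "T \<subseteq> E" for \<omega> T
  proof (rule wedge_eq_proj_prod[OF assms(1,4) \<open>finite T\<close> _ _ proj])
    show "T \<subseteq> S"
      using that(3) assms(5) by blast
    show "\<forall>t\<in>T. \<omega> t \<in> \<Gamma> t"
      using that assms(3,5) by (auto simp: Omega_def PiE_iff)
  qed
  then show ?thesis
    unfolding F_set_def mem_Collect_eq
    by (intro ball_cong[OF refl] ex_cong1) (metis (no_types, lifting))
qed

lemma proj_prod_vanishes_on_determining_set:
  assumes fin: "\<forall>t\<in>S. finite (\<Gamma> t)"
    and linear_p: "\<forall>t\<in>S. \<forall>a\<in>\<Gamma> t. linear (p t a)"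
    and resolution: "\<forall>t\<in>S. \<forall>x. (\<Sum>a\<in>\<Gamma> t. p t a x) = x"
    and \<phi>: "\<phi> \<in> commuting_vectors (proj_family S \<Gamma> p)"
    and "D \<subseteq> S" and "A \<subseteq> Omega S \<Gamma>" and det: "determined (Omega S \<Gamma>) D A"
    and vanish: "\<forall>\<omega>\<in>A. \<exists>T. finite T \<and> T \<subseteq> S \<and> proj_prod p T \<omega> \<phi> = 0"
    and "\<omega> \<in> A"
  shows "\<exists>T. finite T \<and> T \<subseteq> D \<and> proj_prod p T \<omega> \<phi> = 0"
proof (rule ccontr)
  assume "\<nexists>T. finite T \<and> T \<subseteq> D \<and> proj_prod p T \<omega> \<phi> = 0"
  then have nonzero: "\<And>T. finite T \<Longrightarrow> T \<subseteq> D \<Longrightarrow> proj_prod p T \<omega> \<phi> \<noteq> 0"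
    by blast
  have "\<omega> \<in> Omega S \<Gamma>"
    using assms(6) \<open>\<omega> \<in> A\<close> by blast
  then have "\<forall>t\<in>D. \<omega> t \<in> \<Gamma> t"
    using \<open>D \<subseteq> S\<close> by (auto simp: Omega_def)
  from proj_prod_nonvanishing_extension[OF fin linear_p resolution \<phi> \<open>D \<subseteq> S\<close> this nonzero]
  obtain \<omega>' where "\<omega>' \<in> Omega S \<Gamma>" "\<forall>t\<in>D. \<omega>' t = \<omega> t"
    and "\<forall>T. finite T \<longrightarrow> T \<subseteq> S \<longrightarrow> proj_prod p T \<omega>' \<phi> \<noteq> 0"
    unfolding Omega_def by blast
  moreover have "\<omega>' \<in> A"
    using det \<open>\<omega> \<in> A\<close> \<open>\<omega> \<in> Omega S \<Gamma>\<close> \<open>\<omega>' \<in> Omega S \<Gamma>\<close> \<open>\<forall>t\<in>D. \<omega>' t = \<omega> t\<close>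
    unfolding determined_def by metis
  ultimately show False
    using vanish by blast
qed

theorem theorem4:
  fixes J :: "'h::{real_inner, complete_space} \<Rightarrow> 'h"
    and S :: "'s set" and \<Gamma> :: "'s \<Rightarrow> 'b set"
    and p :: "'s \<Rightarrow> 'b \<Rightarrow> 'h \<Rightarrow> 'h"
    and D :: "'s set" and A :: "('s \<Rightarrow> 'b) set"
  assumes cs: "complex_structure J"
    and fin: "\<forall>t\<in>S. finite (\<Gamma> t)"
    and proj: "\<forall>t\<in>S. \<forall>a\<in>\<Gamma> t. is_projection J (p t a)"
    and resol: "\<forall>t\<in>S. \<forall>x. (\<Sum>a\<in>\<Gamma> t. p t a x) = x"
    and DS: "D \<subseteq> S"
    and AO: "A \<subseteq> Omega S \<Gamma>"
    and det: "determined (Omega S \<Gamma>) D A"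
  shows "F_set J p S A \<inter> commuting_vectors (proj_family S \<Gamma> p)
       = F_set J p D A \<inter> commuting_vectors (proj_family S \<Gamma> p)"
proof -
  have linear_p: "\<forall>t\<in>S. \<forall>a\<in>\<Gamma> t. linear (p t a)"
    using proj by (simp add: is_projection_def bounded_linear.linear)
  have "\<phi> \<in> F_set J p S A \<longleftrightarrow> \<phi> \<in> F_set J p D A"
    if \<phi>: "\<phi> \<in> commuting_vectors (proj_family S \<Gamma> p)" for \<phi>
    unfolding mem_F_set_iff_proj_prod[OF cs proj AO \<phi> order_refl]
      mem_F_set_iff_proj_prod[OF cs proj AO \<phi> DS]
  proof
    show "\<forall>\<omega>\<in>A. \<exists>T. finite T \<and> T \<subseteq> D \<and> proj_prod p T \<omega> \<phi> = 0"
      if "\<forall>\<omega>\<in>A. \<exists>T. finite T \<and> T \<subseteq> S \<and> proj_prod p T \<omega> \<phi> = 0"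
      using proj_prod_vanishes_on_determining_set[OF fin linear_p resol \<phi> DS AO det that] by blast
    show "\<forall>\<omega>\<in>A. \<exists>T. finite T \<and> T \<subseteq> S \<and> proj_prod p T \<omega> \<phi> = 0"
      if "\<forall>\<omega>\<in>A. \<exists>T. finite T \<and> T \<subseteq> D \<and> proj_prod p T \<omega> \<phi> = 0"
      using that DS by (meson subset_trans)
  qed
  then show ?thesis
    by blast
qed

end
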